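(* For the sum-throughput maximization problem described in the context, there exist optimal average transmit powers $(\mathbf{p}_1^*,\mathbf{p}_2^*,\mathbf{p}_3^* )$ that do not yield a battery overflow at any of the nodes $T_1,T_2,T_3$ throughout the communication session, i.e., they satisfy $\sum_{i=1}^{n} E_{j,i} - \sum_{i=1}^{n-1} l_i p^*_{j,i} \leq E_{j,max}$ for all $j=1,2,3$ and $n=1,\dots,N$.
   Context: Consider an AWGN two-way relay channel in which two source nodes $T_1$ and $T_2$ exchange independent messages only through a relay node $T_3$ (no direct link), with reciprocal channel power gains $h_{13}$ (between $T_1$ and $T_3$) and $h_{23}$ (between $T_2$ and $T_3$); the relay has no data buffer. All three nodes are energy harvesting: node $T_j$, $j=1,2,3$, harvests $E_{j,n}\geq 0$ units of energy at time $s_n$ (with $s_1=0$ and $E_{j,1}$ the initial battery charge) and stores it in a battery of capacity $E_{j,max}$; energy in excess of the capacity is lost. Epoch $n$ is the interval of length $l_n=s_{n+1}-s_n$, and the session consists of $N$ epochs. In epoch $n$ node $T_j$ uses average transmit power $p_{j,n}$, subject to $p_{j,n}\le B_{j,n}/l_n$ where the battery state evolves as $B_{j,n+1}=\min\{E_{j,max},B_{j,n}-l_np_{j,n}+E_{j,n+1}\}$. The energy harvesting profile is known non-causally (offline). A power policy is $\mathbf{p}_j=(p_{j,1},\dots,p_{j,N})$, $j=1,2,3$ (plus multiple-access phase fractions $\Delta_n\in[0,1]$ for half-duplex nodes), and the goal is to maximize the sum-throughput $\sum_{n=1}^N l_n(R_{1,n}+R_{2,n})$, where in each epoch the rate pair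 $(R_{1,n},R_{2,n})$ must lie in the achievable region $\mathcal{R}_{FD}(p_{1,n},p_{2,n},p_{3,n})$ (full-duplex) or $\mathcal{R}_{HD}(p_{1,n},p_{2,n},p_{3,n},\Delta_n)$ (half-duplex) of the chosen relaying scheme (decode-and-forward, compress-and-forward, amplify-and-forward, compute-and-forward, or a hybrid of these), taken in its concavified form, i.e., including all time-sharing combinations within an epoch with the given average powers. A battery overflow at node $T_j$ at the end of epoch $n$ means $\sum_{i=1}^{n} E_{j,i} - \sum_{i=1}^{n-1} l_i p_{j,i} - E_{j,max} > 0$. *)

theory Defs
  imports Complex_Main
begin

text \<open>E j n : energy harvested by node j at time s_n (E j 1 = initial charge),
  Emax j : battery capacity of node j, l n : length of epoch n,
  p j n : average transmit power of node j in epoch n.\<close>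

text \<open>Battery level of node j at the start of epoch (k+1):
  B_1 = min Emax E_1,  B_(n+1) = min Emax (B_n - l_n p_n + E_(n+1)).\<close>
fun batt :: "(nat \<Rightarrow> real) \<Rightarrow> real \<Rightarrow> (nat \<Rightarrow> real) \<Rightarrow> (nat \<Rightarrow> real) \<Rightarrow> nat \<Rightarrow> real" where
  "batt E Emax l p 0 = min Emax (E 1)"
| "batt E Emax l p (Suc k) =
     min Emax (batt E Emax l p k - l (Suc k) * p (Suc k) + E (Suc (Suc k)))"

text \<open>Feasible policy: powers p, MAC phase fractions D, rates R1 R2, for the
  (concavified) achievable region Reg p1 p2 p3 D (for full duplex Reg ignores D).\<close>
definition feasible ::
  "nat \<Rightarrow> (nat \<Rightarrow> real) \<Rightarrow> (nat \<Rightarrow> nat \<Rightarrow> real) \<Rightarrow> (nat \<Rightarrow> real)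
   \<Rightarrow> (real \<Rightarrow> real \<Rightarrow> real \<Rightarrow> real \<Rightarrow> (real \<times> real) set)
   \<Rightarrow> (nat \<Rightarrow> nat \<Rightarrow> real) \<Rightarrow> (nat \<Rightarrow> real) \<Rightarrow> (nat \<Rightarrow> real) \<Rightarrow> (nat \<Rightarrow> real) \<Rightarrow> bool"
  where
  "feasible N l E Emax Reg p D R1 R2 \<longleftrightarrow>
     (\<forall>n\<in>{1..N}.
        (\<forall>j\<in>{1,2,3::nat}. 0 \<le> p j n \<and> p j n \<le> batt (E j) (Emax j) l (p j) (n - 1) / l n)
      \<and> 0 \<le> D n \<and> D n \<le> 1
      \<and> (R1 n, R2 n) \<in> Reg (p 1 n) (p 2 n) (p 3 n) (D n))"

definition throughput :: "nat \<Rightarrow> (nat \<Rightarrow> real) \<Rightarrow> (nat \<Rightarrow> real) \<Rightarrow> (nat \<Rightarrow> real) \<Rightarrow> real" where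
  "throughput N l R1 R2 = (\<Sum>n=1..N. l n * (R1 n + R2 n))"

definition optimal where
  "optimal N l E Emax Reg p D R1 R2 \<longleftrightarrow>
     feasible N l E Emax Reg p D R1 R2 \<and>
     (\<forall>p' D' R1' R2'. feasible N l E Emax Reg p' D' R1' R2' \<longrightarrow>
        throughput N l R1' R2' \<le> throughput N l R1 R2)"

definition no_overflow :: "nat \<Rightarrow> (nat \<Rightarrow> real) \<Rightarrow> (nat \<Rightarrow> real) \<Rightarrow> real \<Rightarrow> (nat \<Rightarrow> real) \<Rightarrow> bool" where
  "no_overflow N l Ej Emaxj pj \<longleftrightarrow>
     (\<forall>n\<in>{1..N}. (\<Sum>i=1..n. Ej i) - (\<Sum>i=1..n-1. l i * pj i) \<le> Emaxj)"

end

theory Submission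
  imports Defs
begin

text \<open>Energy that a battery would lose to overflow at the end of an epoch can instead be
  spent in that epoch, by raising the transmit power there by the lost amount divided by
  the epoch length. This leaves the battery trajectory unchanged, so the raised policy is
  still feasible and never overflows. Since powers only increase, the achievable regions
  only grow, so the old rates remain achievable and the throughput stays optimal.\<close>

definition overflow :: "(nat \<Rightarrow> real) \<Rightarrow> real \<Rightarrow> (nat \<Rightarrow> real) \<Rightarrow> (nat \<Rightarrow> real) \<Rightarrow> nat \<Rightarrow> real" where
  "overflow e M l p n = max 0 (batt e M l p (n - 1) - l n * p n + e (Suc n) - M)"

text \<open>The last epoch is left unchanged: the energy arriving after it is not assumed to
  fit into the battery, so spending its overflow could violate admissibility.\<close>

definition spend_overflow ::
  "nat \<Rightarrow> (nat \<Rightarrow> real) \<Rightarrow> real \<Rightarrow> (nat \<Rightarrow> real) \<Rightarrow> (nat \<Rightarrow> real) \<Rightarrow> nat \<Rightarrow> real" where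
  "spend_overflow N e M l p n = (if n < N then p n + overflow e M l p n / l n else p n)"

definition admissible :: "nat \<Rightarrow> (nat \<Rightarrow> real) \<Rightarrow> (nat \<Rightarrow> real) \<Rightarrow> real \<Rightarrow> (nat \<Rightarrow> real) \<Rightarrow> bool" where
  "admissible N l e M p \<longleftrightarrow> (\<forall>n\<in>{1..N}. 0 \<le> p n \<and> p n \<le> batt e M l p (n - 1) / l n)"

lemma batt_le_cap: "batt e M l p k \<le> M"
  by (cases k) auto

lemma batt_Suc_overflow:
  "batt e M l p (Suc k) =
     batt e M l p k - l (Suc k) * p (Suc k) + e (Suc (Suc k)) - overflow e M l p (Suc k)"
  by (simp add: overflow_def min_def max_def)

lemma batt_eq_cumulative:
  assumes "e 1 \<le> M" and "\<forall>i\<in>{1..k}. overflow e M l p i = 0"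
  shows "batt e M l p k = (\<Sum>i=1..Suc k. e i) - (\<Sum>i=1..k. l i * p i)"
  using assms(2)
proof (induction k)
  case 0
  then show ?case using assms(1) by simp
next
  case (Suc k)
  then show ?case by (simp add: batt_Suc_overflow del: batt.simps)
qed

lemma no_overflow_if_overflow_zero:
  assumes "\<forall>n\<in>{1..N}. e n \<le> M" and "\<forall>n\<in>{1..<N}. overflow e M l p n = 0"
  shows "no_overflow N l e M p"
  unfolding no_overflow_def
proof
  fix n assume n: "n \<in> {1..N}"
  then obtain k where "n = Suc k" and "k < N"
    by (cases n) auto
  moreover have "batt e M l p k = (\<Sum>i=1..Suc k. e i) - (\<Sum>i=1..k. l i * p i)"
    using assms \<open>k < N\<close> by (intro batt_eq_cumulative) auto
  ultimately show "(\<Sum>i=1..n. e i) - (\<Sum>i=1..n - 1. l i * p i) \<le> M"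
    using batt_le_cap[of e M l p k] by simp
qed

lemma batt_spend_overflow:
  assumes "\<forall>n\<in>{1..<N}. l n \<noteq> 0"
  shows "batt e M l (spend_overflow N e M l p) k = batt e M l p k"
proof (induction k)
  case 0
  then show ?case by simp
next
  case (Suc k)
  show ?case
  proof (cases "Suc k < N")
    case True
    then have "l (Suc k) * spend_overflow N e M l p (Suc k)
                 = l (Suc k) * p (Suc k) + overflow e M l p (Suc k)"
      using assms by (simp add: spend_overflow_def distrib_left)
    then show ?thesis
      using Suc.IH by (simp add: overflow_def min_def max_def)
  next
    case False
    then show ?thesis
      using Suc.IH by (simp add: spend_overflow_def)
  qed
qed

lemma overflow_spend_overflow:
  assumes "\<forall>n\<in>{1..<N}. l n \<noteq> 0" and "n \<in> {1..<N}"
  shows "overflow e M l (spend_overflow N e M l p) n = 0"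
proof -
  have "l n * spend_overflow N e M l p n = l n * p n + overflow e M l p n"
    using assms by (simp add: spend_overflow_def distrib_left)
  then show ?thesis
    using batt_spend_overflow[OF assms(1)] by (simp add: overflow_def)
qed

lemma spend_overflow_ge:
  assumes "0 < l n"
  shows "p n \<le> spend_overflow N e M l p n"
  using assms by (simp add: spend_overflow_def overflow_def)

lemma admissible_spend_overflow:
  assumes l_pos: "\<forall>n\<in>{1..N}. 0 < l n" and e_le_cap: "\<forall>n\<in>{1..N}. e n \<le> M"
    and "admissible N l e M p"
  shows "admissible N l e M (spend_overflow N e M l p)"
  unfolding admissible_def
proof
  fix n assume n: "n \<in> {1..N}"
  let ?q = "spend_overflow N e M l p"
  have l_n: "0 < l n" using l_pos n by blast
  have "0 \<le> p n" "p n \<le> batt e M l p (n - 1) / l n"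
    using \<open>admissible N l e M p\<close> n by (auto simp: admissible_def)
  then have p_n: "0 \<le> p n" "l n * p n \<le> batt e M l p (n - 1)"
    using l_n by (simp_all add: pos_le_divide_eq mult.commute)
  have "l n * ?q n \<le> batt e M l p (n - 1)"
  proof (cases "n < N")
    case True
    then have "e (Suc n) \<le> M" using e_le_cap by simp
    moreover have "l n * ?q n = l n * p n + overflow e M l p n"
      using True l_n by (simp add: spend_overflow_def distrib_left)
    ultimately show ?thesis
      using p_n(2) by (simp add: overflow_def)
  next
    case False
    then show ?thesis using p_n(2) by (simp add: spend_overflow_def)
  qed
  moreover have "batt e M l ?q (n - 1) = batt e M l p (n - 1)"
    using l_pos by (intro batt_spend_overflow) force
  ultimately show "0 \<le> ?q n \<and> ?q n \<le> batt e M l ?q (n - 1) / l n"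
    using spend_overflow_ge[of l n p N e M] l_n p_n(1)
    by (simp add: pos_le_divide_eq mult.commute)
qed

lemma feasible_iff_admissible:
  "feasible N l E Emax Reg p D R1 R2 \<longleftrightarrow>
     (\<forall>j\<in>{1,2,3}. admissible N l (E j) (Emax j) (p j)) \<and>
     (\<forall>n\<in>{1..N}. 0 \<le> D n \<and> D n \<le> 1 \<and> (R1 n, R2 n) \<in> Reg (p 1 n) (p 2 n) (p 3 n) (D n))"
  by (auto simp: feasible_def admissible_def)

lemma feasible_raise_powers:
  assumes "feasible N l E Emax Reg p D R1 R2"
    and Reg_mono: "\<And>a1 a2 a3 b1 b2 b3 d. 0 \<le> a1 \<Longrightarrow> 0 \<le> a2 \<Longrightarrow> 0 \<le> a3 \<Longrightarrow>
        a1 \<le> b1 \<Longrightarrow> a2 \<le> b2 \<Longrightarrow> a3 \<le> b3 \<Longrightarrow> 0 \<le> d \<Longrightarrow> d \<le> 1 \<Longrightarrow>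
        Reg a1 a2 a3 d \<subseteq> Reg b1 b2 b3 d"
    and q_admissible: "\<forall>j\<in>{1,2,3}. admissible N l (E j) (Emax j) (q j)"
    and p_le_q: "\<forall>j\<in>{1,2,3}. \<forall>n\<in>{1..N}. p j n \<le> q j n"
  shows "feasible N l E Emax Reg q D R1 R2"
proof -
  have p_admissible: "\<forall>j\<in>{1,2,3}. admissible N l (E j) (Emax j) (p j)"
    and D_R: "\<forall>n\<in>{1..N}. 0 \<le> D n \<and> D n \<le> 1 \<and> (R1 n, R2 n) \<in> Reg (p 1 n) (p 2 n) (p 3 n) (D n)"
    using assms(1) by (simp_all add: feasible_iff_admissible)
  have "(R1 n, R2 n) \<in> Reg (q 1 n) (q 2 n) (q 3 n) (D n)" if n: "n \<in> {1..N}" for n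
  proof -
    have "Reg (p 1 n) (p 2 n) (p 3 n) (D n) \<subseteq> Reg (q 1 n) (q 2 n) (q 3 n) (D n)"
      using n p_admissible p_le_q D_R by (intro Reg_mono) (auto simp: admissible_def)
    then show ?thesis
      using D_R n by blast
  qed
  then show ?thesis
    using q_admissible D_R by (simp add: feasible_iff_admissible)
qed

theorem proposition1:
  fixes N :: nat
    and l :: "nat \<Rightarrow> real"
    and E :: "nat \<Rightarrow> nat \<Rightarrow> real"
    and Emax :: "nat \<Rightarrow> real"
    and Reg :: "real \<Rightarrow> real \<Rightarrow> real \<Rightarrow> real \<Rightarrow> (real \<times> real) set"
  assumes l_pos: "\<And>n. n \<in> {1..N} \<Longrightarrow> 0 < l n"
    and E_nonneg: "\<And>j n. j \<in> {1,2,3} \<Longrightarrow> n \<in> {1..N} \<Longrightarrow> 0 \<le> E j n"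
    and E_le_cap: "\<And>j n. j \<in> {1,2,3} \<Longrightarrow> n \<in> {1..N} \<Longrightarrow> E j n \<le> Emax j"
    and Reg_mono: "\<And>a1 a2 a3 b1 b2 b3 d. 0 \<le> a1 \<Longrightarrow> 0 \<le> a2 \<Longrightarrow> 0 \<le> a3 \<Longrightarrow>
        a1 \<le> b1 \<Longrightarrow> a2 \<le> b2 \<Longrightarrow> a3 \<le> b3 \<Longrightarrow> 0 \<le> d \<Longrightarrow> d \<le> 1 \<Longrightarrow>
        Reg a1 a2 a3 d \<subseteq> Reg b1 b2 b3 d"
    and Reg_concave: "\<And>a1 a2 a3 b1 b2 b3 d r1 r2 s1 s2 (t::real). 0 \<le> t \<Longrightarrow> t \<le> 1 \<Longrightarrow>
        (r1, r2) \<in> Reg a1 a2 a3 d \<Longrightarrow> (s1, s2) \<in> Reg b1 b2 b3 d \<Longrightarrow>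
        (t * r1 + (1 - t) * s1, t * r2 + (1 - t) * s2) \<in>
          Reg (t * a1 + (1 - t) * b1) (t * a2 + (1 - t) * b2) (t * a3 + (1 - t) * b3) d"
    and has_opt: "\<exists>p D R1 R2. optimal N l E Emax Reg p D R1 R2"
  shows "\<exists>p D R1 R2. optimal N l E Emax Reg p D R1 R2 \<and>
           (\<forall>j\<in>{1,2,3}. no_overflow N l (E j) (Emax j) (p j))"
proof -
  obtain p D R1 R2 where opt: "optimal N l E Emax Reg p D R1 R2"
    using has_opt by blast
  then have p_feasible: "feasible N l E Emax Reg p D R1 R2"
    by (simp add: optimal_def)
  define q where "q j = spend_overflow N (E j) (Emax j) l (p j)" for j
  have l_ne_0: "\<forall>n\<in>{1..<N}. l n \<noteq> 0"
    using l_pos by force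
  have q_admissible_no_overflow: "admissible N l (E j) (Emax j) (q j) \<and> no_overflow N l (E j) (Emax j) (q j)"
    if j: "j \<in> {1,2,3}" for j
  proof
    have "admissible N l (E j) (Emax j) (p j)"
      using p_feasible j by (auto simp: feasible_iff_admissible)
    then show "admissible N l (E j) (Emax j) (q j)"
      unfolding q_def using l_pos E_le_cap[OF j] by (intro admissible_spend_overflow) auto
    show "no_overflow N l (E j) (Emax j) (q j)"
      unfolding q_def using E_le_cap[OF j] overflow_spend_overflow[OF l_ne_0]
      by (intro no_overflow_if_overflow_zero) auto
  qed
  moreover have "\<forall>j\<in>{1,2,3}. \<forall>n\<in>{1..N}. p j n \<le> q j n"
    using l_pos by (simp add: q_def spend_overflow_ge)
  ultimately have "feasible N l E Emax Reg q D R1 R2"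
    by (intro feasible_raise_powers[OF p_feasible Reg_mono]) auto
  then have "optimal N l E Emax Reg q D R1 R2"
    using opt by (simp add: optimal_def)
  then show ?thesis
    using q_admissible_no_overflow by blast
qed

end
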